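(* Let $1\le k\le n$, let $Q$ be a symmetric $n\times n$ matrix with entries in $[0,1]$ and zero diagonal, and let $A=\mathrm{Bern}(Q)$. Let $\varepsilon=\max_{\pi:[n]\to[k]}\|A_\pi-Q_\pi\|_1$. Then \[ \mathbb E[\varepsilon]\le9\sqrt{\rho(Q)\Big(\frac{1+\log k}{n}+\frac{k^2}{n^2}\Big)}, \] and if $n\rho(Q)\ge1$, then with probability at least $1-e^{-n}$, \[ \varepsilon\le8\sqrt{\rho(Q)\Big(\frac{1+\log k}{n}+\frac{k^2}{n^2}\Big)}. \]
   Context: $\mathrm{Bern}(Q)$ is the random symmetric $\{0,1\}$-matrix with $A_{ij}=A_{ji}=1$ with probability $Q_{ij}$ independently for $i<j$ and $A_{ii}=0$. For an $n\times n$ matrix $H$: $\|H\|_1=\frac1{n^2}\sum_{i,j}|H_{ij}|$ and $\rho(H)=\frac1{n^2}\sum_{i,j}H_{ij}$. For $\pi:[n]\to[k]$ with classes $V_i=\pi^{-1}(i)$, $H_\pi$ is the $n\times n$ matrix whose entry at $(u,v)\in V_i\times V_j$ is the average $\frac1{|V_i||V_j|}\sum_{(a,b)\in V_i\times V_j}H_{ab}$. *)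

theory Defs
  imports "HOL-Probability.Probability"
begin

text \<open>n x n matrices are represented as functions nat => nat => real; only the
entries with indices below n matter.\<close>

definition bern :: "nat \<Rightarrow> (nat \<Rightarrow> nat \<Rightarrow> real) \<Rightarrow> (nat \<Rightarrow> nat \<Rightarrow> real) pmf" where
  "bern n Q = map_pmf
     (\<lambda>b i j. if i < j then (if b (i, j) then 1 else 0)
              else if j < i then (if b (j, i) then 1 else 0) else 0)
     (Pi_pmf {(i, j). i < j \<and> j < n} False (\<lambda>(i, j). bernoulli_pmf (Q i j)))"

definition norm1 :: "nat \<Rightarrow> (nat \<Rightarrow> nat \<Rightarrow> real) \<Rightarrow> real" where
  "norm1 n H = (1 / (real n)^2) * (\<Sum>i<n. \<Sum>j<n. \<bar>H i j\<bar>)"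

definition rho :: "nat \<Rightarrow> (nat \<Rightarrow> nat \<Rightarrow> real) \<Rightarrow> real" where
  "rho n H = (1 / (real n)^2) * (\<Sum>i<n. \<Sum>j<n. H i j)"

definition cls :: "nat \<Rightarrow> (nat \<Rightarrow> nat) \<Rightarrow> nat \<Rightarrow> nat set" where
  "cls n \<pi> i = {a. a < n \<and> \<pi> a = i}"

definition blockavg :: "nat \<Rightarrow> (nat \<Rightarrow> nat) \<Rightarrow> (nat \<Rightarrow> nat \<Rightarrow> real) \<Rightarrow> nat \<Rightarrow> nat \<Rightarrow> real" where
  "blockavg n \<pi> H u v =
     (\<Sum>a\<in>cls n \<pi> (\<pi> u). \<Sum>b\<in>cls n \<pi> (\<pi> v). H a b)
       / (real (card (cls n \<pi> (\<pi> u))) * real (card (cls n \<pi> (\<pi> v))))"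

definition eps :: "nat \<Rightarrow> nat \<Rightarrow> (nat \<Rightarrow> nat \<Rightarrow> real) \<Rightarrow> (nat \<Rightarrow> nat \<Rightarrow> real) \<Rightarrow> real" where
  "eps n k A Q = Max ((\<lambda>\<pi>. norm1 n (\<lambda>u v. blockavg n \<pi> A u v - blockavg n \<pi> Q u v))
                        ` ({..<n} \<rightarrow>\<^sub>E {..<k}))"

end

theory Submission
  imports Defs
begin

(* For a fixed partition the matrix A_pi - Q_pi is constant on blocks, so its L1 norm is a linear
   form in A - Q whose coefficients are the signs of the block sums. Summed over unordered pairs it
   equals 2/n^2 * sum_{i<j} c_ij (A_ij - Q_ij) with c_ij in {-1, 0, 1}; hence eps > 2t/n^2 forces
   one of at most k^n 2^(k^2) such sums (one per partition and sign pattern) above t. Each is a sum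
   of independent centred Bernoulli variables whose moment generating function at 0 <= l <= 1 is at
   most exp (l^2 m), where m = sum_{i<j} Q_ij. Put B = n (1 + log k) + k^2 and t = sqrt (32 m B).
   If B <= m, Chernoff's bound with l = sqrt (B/m) and a union bound give probability at most
   k^n 2^(k^2) e^(-B) <= e^(-n). Otherwise t >= 5m, and eps <= rho(A) + rho(Q) together with a
   Chernoff bound for the number of edges suffices. The expectation bound follows from the tail
   bound and eps <= 2, or, when n rho(Q) < 1, directly from E eps <= 2 rho(Q). *)

section \<open>Sums over unordered pairs\<close>

definition upper_pairs :: "nat \<Rightarrow> (nat \<times> nat) set" where
  "upper_pairs n = {(i, j). i < j \<and> j < n}"

lemma finite_upper_pairs [simp]: "finite (upper_pairs n)"
  unfolding upper_pairs_def by (rule finite_subset[of _ "{..<n} \<times> {..<n}"]) auto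

lemma upper_pairs_Suc: "upper_pairs (Suc n) = upper_pairs n \<union> (\<lambda>a. (a, n)) ` {..<n}"
  unfolding upper_pairs_def by auto

lemma sum_square_eq_sum_upper_pairs:
  fixes h :: "nat \<Rightarrow> nat \<Rightarrow> 'a :: comm_monoid_add"
  assumes "\<And>a. a < n \<Longrightarrow> h a a = 0"
  shows "(\<Sum>a<n. \<Sum>b<n. h a b) = (\<Sum>e\<in>upper_pairs n. h (fst e) (snd e) + h (snd e) (fst e))"
  using assms
proof (induction n)
  case 0
  then show ?case by (simp add: upper_pairs_def)
next
  case (Suc n)
  have disjoint: "upper_pairs n \<inter> (\<lambda>a. (a, n)) ` {..<n} = {}"
    by (auto simp: upper_pairs_def)
  have "(\<Sum>e\<in>upper_pairs (Suc n). h (fst e) (snd e) + h (snd e) (fst e))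
      = (\<Sum>e\<in>upper_pairs n. h (fst e) (snd e) + h (snd e) (fst e)) + (\<Sum>a<n. h a n + h n a)"
    unfolding upper_pairs_Suc using disjoint
    by (subst sum.union_disjoint) (auto simp: sum.reindex inj_on_def)
  moreover have "(\<Sum>a<Suc n. \<Sum>b<Suc n. h a b)
      = (\<Sum>a<n. \<Sum>b<n. h a b) + (\<Sum>a<n. h a n + h n a) + h n n"
    by (simp add: sum.distrib algebra_simps)
  ultimately show ?case using Suc by simp
qed

lemma sum_square_symmetric:
  fixes H :: "nat \<Rightarrow> nat \<Rightarrow> real"
  assumes "\<And>a b. a < n \<Longrightarrow> b < n \<Longrightarrow> H a b = H b a" and "\<And>a. a < n \<Longrightarrow> H a a = 0"
  shows "(\<Sum>a<n. \<Sum>b<n. H a b) = 2 * (\<Sum>e\<in>upper_pairs n. H (fst e) (snd e))"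
proof -
  have "(\<Sum>a<n. \<Sum>b<n. H a b) = (\<Sum>e\<in>upper_pairs n. H (fst e) (snd e) + H (snd e) (fst e))"
    by (rule sum_square_eq_sum_upper_pairs) (use assms in auto)
  also have "\<dots> = (\<Sum>e\<in>upper_pairs n. 2 * H (fst e) (snd e))"
    by (intro sum.cong refl) (use assms(1) in \<open>auto simp: upper_pairs_def\<close>)
  finally show ?thesis by (simp add: sum_distrib_left)
qed

definition edge_mass :: "nat \<Rightarrow> (nat \<Rightarrow> nat \<Rightarrow> real) \<Rightarrow> real" where
  "edge_mass n H = (\<Sum>e\<in>upper_pairs n. H (fst e) (snd e))"

lemma rho_eq_edge_mass:
  assumes "\<And>a b. a < n \<Longrightarrow> b < n \<Longrightarrow> H a b = H b a" and "\<And>a. a < n \<Longrightarrow> H a a = 0"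
  shows "rho n H = 2 / (real n)^2 * edge_mass n H"
  using sum_square_symmetric[of n H, OF assms] unfolding rho_def edge_mass_def by simp

lemma rho_le_1:
  assumes "\<And>a b. a < n \<Longrightarrow> b < n \<Longrightarrow> H a b \<le> 1"
  shows "rho n H \<le> 1"
proof (cases "n = 0")
  case False
  have "(\<Sum>a<n. \<Sum>b<n. H a b) \<le> (\<Sum>a<n. \<Sum>b<n. 1)"
    by (intro sum_mono) (use assms in auto)
  then show ?thesis
    unfolding rho_def using False by (simp add: field_simps power2_eq_square)
qed (simp add: rho_def)

lemma rho_nonneg:
  assumes "\<And>a b. a < n \<Longrightarrow> b < n \<Longrightarrow> 0 \<le> H a b"
  shows "0 \<le> rho n H"
  unfolding rho_def by (intro mult_nonneg_nonneg sum_nonneg) (use assms in auto)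

section \<open>Block averages\<close>

lemma finite_cls [simp]: "finite (cls n \<pi> i)"
  unfolding cls_def by auto

lemma card_cls_pos: "u < n \<Longrightarrow> 0 < card (cls n \<pi> (\<pi> u))"
  by (subst card_gt_0_iff) (auto simp: cls_def)

lemma sum_cls: "(\<Sum>a\<in>cls n \<pi> i. g a) = (\<Sum>a<n. if \<pi> a = i then g a else 0)"
  unfolding cls_def by (simp add: sum.If_cases Int_def)

lemma sum_swap_pairs:
  "(\<Sum>u\<in>A. \<Sum>v\<in>B. \<Sum>a\<in>A. \<Sum>b\<in>B. F u v a b) = (\<Sum>a\<in>A. \<Sum>b\<in>B. \<Sum>u\<in>A. \<Sum>v\<in>B. F u v a b)"
proof -
  have "(\<Sum>u\<in>A. \<Sum>v\<in>B. \<Sum>a\<in>A. \<Sum>b\<in>B. F u v a b) = (\<Sum>u\<in>A. \<Sum>a\<in>A. \<Sum>v\<in>B. \<Sum>b\<in>B. F u v a b)"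
    by (intro sum.cong refl sum.swap)
  also have "\<dots> = (\<Sum>a\<in>A. \<Sum>u\<in>A. \<Sum>b\<in>B. \<Sum>v\<in>B. F u v a b)"
    by (subst sum.swap) (intro sum.cong refl sum.swap)
  also have "\<dots> = (\<Sum>a\<in>A. \<Sum>b\<in>B. \<Sum>u\<in>A. \<Sum>v\<in>B. F u v a b)"
    by (intro sum.cong refl sum.swap)
  finally show ?thesis .
qed

lemma sum_mult_blockavg:
  fixes D :: "nat \<Rightarrow> nat \<Rightarrow> real"
  shows "(\<Sum>u<n. \<Sum>v<n. f (\<pi> u) (\<pi> v) * blockavg n \<pi> D u v)
       = (\<Sum>a<n. \<Sum>b<n. f (\<pi> a) (\<pi> b) * D a b)"
proof -
  define c where "c u = real (card (cls n \<pi> (\<pi> u)))" for u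
  define g where "g a b u v = (if \<pi> a = \<pi> u \<and> \<pi> b = \<pi> v then f (\<pi> a) (\<pi> b) * D a b / (c u * c v) else 0)"
    for a b u v
  have blockavg_eq: "blockavg n \<pi> D u v = (\<Sum>a<n. \<Sum>b<n. if \<pi> a = \<pi> u \<and> \<pi> b = \<pi> v then D a b / (c u * c v) else 0)"
    for u v
    unfolding blockavg_def c_def sum_cls sum_divide_distrib
    by (intro sum.cong refl) (auto simp: sum_divide_distrib intro!: sum.cong)
  have "(\<Sum>u<n. \<Sum>v<n. f (\<pi> u) (\<pi> v) * blockavg n \<pi> D u v)
      = (\<Sum>u<n. \<Sum>v<n. \<Sum>a<n. \<Sum>b<n. g a b u v)"
    unfolding blockavg_eq g_def sum_distrib_left by (intro sum.cong refl) auto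
  also have "\<dots> = (\<Sum>a<n. \<Sum>b<n. \<Sum>u<n. \<Sum>v<n. g a b u v)"
    by (rule sum_swap_pairs)
  also have "\<dots> = (\<Sum>a<n. \<Sum>b<n. f (\<pi> a) (\<pi> b) * D a b)"
  proof (intro sum.cong refl)
    fix a b assume "a \<in> {..<n}" "b \<in> {..<n}"
    then have "(\<Sum>u<n. if \<pi> u = \<pi> a then 1 / c a else 0) = 1"
      and "(\<Sum>v<n. if \<pi> v = \<pi> b then 1 / c b else 0) = 1"
      using card_cls_pos[of a n \<pi>] card_cls_pos[of b n \<pi>]
      by (auto simp: c_def sum_cls[symmetric] card_gt_0_iff)
    moreover have "(\<Sum>u<n. \<Sum>v<n. g a b u v)
        = (\<Sum>u<n. \<Sum>v<n. (if \<pi> u = \<pi> a then 1 / c a else 0)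
            * ((if \<pi> v = \<pi> b then 1 / c b else 0) * (f (\<pi> a) (\<pi> b) * D a b)))"
      unfolding g_def by (intro sum.cong refl) (auto simp: c_def)
    moreover have "\<dots> = (\<Sum>u<n. if \<pi> u = \<pi> a then 1 / c a else 0)
          * ((\<Sum>v<n. if \<pi> v = \<pi> b then 1 / c b else 0) * (f (\<pi> a) (\<pi> b) * D a b))"
      unfolding sum_distrib_left sum_distrib_right by (rule sum.swap)
    ultimately show "(\<Sum>u<n. \<Sum>v<n. g a b u v) = f (\<pi> a) (\<pi> b) * D a b"
      by simp
  qed
  finally show ?thesis .
qed

lemma sum_blockavg: "(\<Sum>u<n. \<Sum>v<n. blockavg n \<pi> H u v) = (\<Sum>a<n. \<Sum>b<n. H a b)"
  using sum_mult_blockavg[where f = "\<lambda>_ _. 1"] by simp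

lemma sum_abs_blockavg:
  fixes D :: "nat \<Rightarrow> nat \<Rightarrow> real"
  shows "(\<Sum>u<n. \<Sum>v<n. \<bar>blockavg n \<pi> D u v\<bar>)
       = (\<Sum>a<n. \<Sum>b<n. (if 0 \<le> (\<Sum>x\<in>cls n \<pi> (\<pi> a). \<Sum>y\<in>cls n \<pi> (\<pi> b). D x y) then 1 else -1) * D a b)"
    (is "_ = (\<Sum>a<n. \<Sum>b<n. ?s (\<pi> a) (\<pi> b) * D a b)")
proof -
  have "\<bar>blockavg n \<pi> D u v\<bar> = ?s (\<pi> u) (\<pi> v) * blockavg n \<pi> D u v" if "u < n" "v < n" for u v
  proof -
    have "0 < real (card (cls n \<pi> (\<pi> u))) * real (card (cls n \<pi> (\<pi> v)))"
      using card_cls_pos that by auto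
    then show ?thesis
      unfolding blockavg_def by (auto simp: abs_if divide_less_0_iff zero_le_divide_iff)
  qed
  then have "(\<Sum>u<n. \<Sum>v<n. \<bar>blockavg n \<pi> D u v\<bar>) = (\<Sum>u<n. \<Sum>v<n. ?s (\<pi> u) (\<pi> v) * blockavg n \<pi> D u v)"
    by (intro sum.cong refl) simp
  also have "\<dots> = (\<Sum>a<n. \<Sum>b<n. ?s (\<pi> a) (\<pi> b) * D a b)"
    by (rule sum_mult_blockavg)
  finally show ?thesis .
qed

section \<open>Reduction to linear edge statistics\<close>

definition adjacency :: "(nat \<times> nat \<Rightarrow> bool) \<Rightarrow> nat \<Rightarrow> nat \<Rightarrow> real" where
  "adjacency \<omega> i j = (if i < j then of_bool (\<omega> (i, j)) else if j < i then of_bool (\<omega> (j, i)) else 0)"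

lemma adjacency_sym: "adjacency \<omega> a b = adjacency \<omega> b a"
  unfolding adjacency_def by auto

lemma adjacency_diag: "adjacency \<omega> a a = 0"
  unfolding adjacency_def by auto

lemma adjacency_upper_pair: "e \<in> upper_pairs n \<Longrightarrow> adjacency \<omega> (fst e) (snd e) = of_bool (\<omega> e)"
  unfolding adjacency_def upper_pairs_def by auto

lemma adjacency_bounds: "0 \<le> adjacency \<omega> a b" "adjacency \<omega> a b \<le> 1"
  unfolding adjacency_def by auto

lemma edge_mass_adjacency: "edge_mass n (adjacency \<omega>) = (\<Sum>e\<in>upper_pairs n. of_bool (\<omega> e))"
  unfolding edge_mass_def by (simp add: adjacency_upper_pair)

lemma rho_adjacency: "rho n (adjacency \<omega>) = 2 / (real n)^2 * (\<Sum>e\<in>upper_pairs n. of_bool (\<omega> e))"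
  by (simp add: rho_eq_edge_mass adjacency_sym adjacency_diag edge_mass_adjacency)

definition edge_deviation ::
    "nat \<Rightarrow> (nat \<Rightarrow> nat \<Rightarrow> real) \<Rightarrow> (nat \<times> nat \<Rightarrow> real) \<Rightarrow> (nat \<times> nat \<Rightarrow> bool) \<Rightarrow> real" where
  "edge_deviation n Q c \<omega> = (\<Sum>e\<in>upper_pairs n. c e * (of_bool (\<omega> e) - Q (fst e) (snd e)))"

definition sign_patterns :: "nat \<Rightarrow> nat \<Rightarrow> ((nat \<Rightarrow> nat) \<times> (nat \<times> nat \<Rightarrow> real)) set" where
  "sign_patterns n k = ({..<n} \<rightarrow>\<^sub>E {..<k}) \<times> (({..<k} \<times> {..<k}) \<rightarrow>\<^sub>E {-1, 1})"

definition block_sign :: "(nat \<Rightarrow> nat) \<Rightarrow> (nat \<times> nat \<Rightarrow> real) \<Rightarrow> nat \<times> nat \<Rightarrow> real" where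
  "block_sign \<pi> \<sigma> e = (\<sigma> (\<pi> (fst e), \<pi> (snd e)) + \<sigma> (\<pi> (snd e), \<pi> (fst e))) / 2"

lemma finite_sign_patterns [simp]: "finite (sign_patterns n k)"
  unfolding sign_patterns_def by (auto intro!: finite_PiE)

lemma card_sign_patterns: "card (sign_patterns n k) = k ^ n * 2 ^ (k * k)"
proof -
  have two: "card {-1, 1 :: real} = 2" by simp
  show ?thesis
    unfolding sign_patterns_def by (simp add: card_cartesian_product card_PiE prod_constant two)
qed

lemma block_sign_cases:
  assumes "(\<pi>, \<sigma>) \<in> sign_patterns n k" and "e \<in> upper_pairs n"
  shows "block_sign \<pi> \<sigma> e \<in> {-1, 0, 1}"
proof -
  have "\<pi> (fst e) < k" "\<pi> (snd e) < k"
    using assms by (auto simp: sign_patterns_def upper_pairs_def PiE_def Pi_def)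
  then have "\<sigma> (\<pi> (fst e), \<pi> (snd e)) \<in> {-1, 1}" "\<sigma> (\<pi> (snd e), \<pi> (fst e)) \<in> {-1, 1}"
    using assms(1) by (auto simp: sign_patterns_def PiE_def Pi_def)
  then show ?thesis
    unfolding block_sign_def by auto
qed

lemma norm1_blockavg_diff_eq_edge_deviation:
  fixes Q :: "nat \<Rightarrow> nat \<Rightarrow> real"
  assumes Q_sym: "\<And>a b. a < n \<Longrightarrow> b < n \<Longrightarrow> Q a b = Q b a"
    and Q_diag: "\<And>a. a < n \<Longrightarrow> Q a a = 0"
    and \<pi>: "\<pi> \<in> {..<n} \<rightarrow>\<^sub>E {..<k}"
  obtains \<sigma> where "(\<pi>, \<sigma>) \<in> sign_patterns n k"
    and "norm1 n (\<lambda>u v. blockavg n \<pi> (adjacency \<omega>) u v - blockavg n \<pi> Q u v)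
         = 2 / (real n)^2 * edge_deviation n Q (block_sign \<pi> \<sigma>) \<omega>"
proof -
  define D where "D a b = adjacency \<omega> a b - Q a b" for a b
  define sg where "sg i j = (if 0 \<le> (\<Sum>a\<in>cls n \<pi> i. \<Sum>b\<in>cls n \<pi> j. D a b) then 1 else -1 :: real)"
    for i j
  define \<sigma> where "\<sigma> = restrict (\<lambda>(i, j). sg i j) ({..<k} \<times> {..<k})"
  have "sg i j \<in> {-1, 1}" for i j
    by (simp add: sg_def)
  then have pattern: "(\<pi>, \<sigma>) \<in> sign_patterns n k"
    unfolding sign_patterns_def \<sigma>_def using \<pi> by auto
  have diff: "blockavg n \<pi> (adjacency \<omega>) u v - blockavg n \<pi> Q u v = blockavg n \<pi> D u v" for u v
    unfolding blockavg_def D_def by (simp add: sum_subtractf diff_divide_distrib)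
  have "(\<Sum>u<n. \<Sum>v<n. \<bar>blockavg n \<pi> D u v\<bar>) = (\<Sum>a<n. \<Sum>b<n. sg (\<pi> a) (\<pi> b) * D a b)"
    unfolding sg_def by (rule sum_abs_blockavg)
  also have "\<dots> = (\<Sum>e\<in>upper_pairs n. sg (\<pi> (fst e)) (\<pi> (snd e)) * D (fst e) (snd e)
                                      + sg (\<pi> (snd e)) (\<pi> (fst e)) * D (snd e) (fst e))"
    by (rule sum_square_eq_sum_upper_pairs) (simp add: D_def adjacency_diag Q_diag)
  also have "\<dots> = (\<Sum>e\<in>upper_pairs n. 2 * (block_sign \<pi> \<sigma> e * (of_bool (\<omega> e) - Q (fst e) (snd e))))"
  proof (intro sum.cong refl)
    fix e assume e: "e \<in> upper_pairs n"
    then have "fst e < n" "snd e < n" by (auto simp: upper_pairs_def)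
    then have \<sigma>_eq: "\<sigma> (\<pi> (fst e), \<pi> (snd e)) = sg (\<pi> (fst e)) (\<pi> (snd e))"
        "\<sigma> (\<pi> (snd e), \<pi> (fst e)) = sg (\<pi> (snd e)) (\<pi> (fst e))"
      and D_swap: "D (snd e) (fst e) = D (fst e) (snd e)"
      using \<pi> Q_sym by (auto simp: \<sigma>_def D_def adjacency_sym)
    have D_eq: "D (fst e) (snd e) = of_bool (\<omega> e) - Q (fst e) (snd e)"
      using adjacency_upper_pair[OF e] by (simp add: D_def)
    show "sg (\<pi> (fst e)) (\<pi> (snd e)) * D (fst e) (snd e)
          + sg (\<pi> (snd e)) (\<pi> (fst e)) * D (snd e) (fst e)
        = 2 * (block_sign \<pi> \<sigma> e * (of_bool (\<omega> e) - Q (fst e) (snd e)))"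
      unfolding block_sign_def \<sigma>_eq D_swap D_eq by (simp add: algebra_simps)
  qed
  finally have "(\<Sum>u<n. \<Sum>v<n. \<bar>blockavg n \<pi> D u v\<bar>) = 2 * edge_deviation n Q (block_sign \<pi> \<sigma>) \<omega>"
    unfolding edge_deviation_def by (simp add: sum_distrib_left)
  then show ?thesis
    using that[OF pattern] unfolding norm1_def diff by simp
qed

lemma nonempty_partitions: "0 < k \<Longrightarrow> {..<n} \<rightarrow>\<^sub>E {..<k} \<noteq> {}"
  by (metis PiE_eq_empty_iff lessThan_iff empty_iff)

lemma eps_le_rho_add_rho:
  assumes "\<And>a b. a < n \<Longrightarrow> b < n \<Longrightarrow> 0 \<le> A a b"
    and "\<And>a b. a < n \<Longrightarrow> b < n \<Longrightarrow> 0 \<le> Q a b"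
    and "0 < k"
  shows "eps n k A Q \<le> rho n A + rho n Q"
  unfolding eps_def
proof (rule Max.boundedI)
  fix x assume "x \<in> (\<lambda>\<pi>. norm1 n (\<lambda>u v. blockavg n \<pi> A u v - blockavg n \<pi> Q u v)) ` ({..<n} \<rightarrow>\<^sub>E {..<k})"
  then obtain \<pi> where x: "x = norm1 n (\<lambda>u v. blockavg n \<pi> A u v - blockavg n \<pi> Q u v)"
    by auto
  have nonneg: "0 \<le> blockavg n \<pi> H u v" if "\<And>a b. a < n \<Longrightarrow> b < n \<Longrightarrow> 0 \<le> H a b" for H u v
    unfolding blockavg_def by (intro divide_nonneg_nonneg sum_nonneg) (auto simp: cls_def that)
  have "\<bar>blockavg n \<pi> A u v - blockavg n \<pi> Q u v\<bar> \<le> blockavg n \<pi> A u v + blockavg n \<pi> Q u v" for u v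
    using nonneg[of A u v, OF assms(1)] nonneg[of Q u v, OF assms(2)] by (simp add: abs_le_iff)
  then have "x \<le> 1 / (real n)^2 * (\<Sum>u<n. \<Sum>v<n. blockavg n \<pi> A u v + blockavg n \<pi> Q u v)"
    unfolding x norm1_def by (intro mult_left_mono sum_mono) auto
  also have "\<dots> = rho n A + rho n Q"
    unfolding rho_def sum.distrib sum_blockavg by (simp add: distrib_left)
  finally show "x \<le> rho n A + rho n Q" .
qed (use nonempty_partitions[OF assms(3)] in \<open>auto intro: finite_PiE\<close>)

lemma eps_gt_imp_edge_deviation_gt:
  fixes Q :: "nat \<Rightarrow> nat \<Rightarrow> real"
  assumes "\<And>a b. a < n \<Longrightarrow> b < n \<Longrightarrow> Q a b = Q b a"
    and "\<And>a. a < n \<Longrightarrow> Q a a = 0"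
    and "0 < k"
    and "2 / (real n)^2 * t < eps n k (adjacency \<omega>) Q"
  shows "\<exists>(\<pi>, \<sigma>)\<in>sign_patterns n k. t < edge_deviation n Q (block_sign \<pi> \<sigma>) \<omega>"
proof -
  let ?norm = "\<lambda>\<pi>. norm1 n (\<lambda>u v. blockavg n \<pi> (adjacency \<omega>) u v - blockavg n \<pi> Q u v)"
  have "finite (?norm ` ({..<n} \<rightarrow>\<^sub>E {..<k}))" and "?norm ` ({..<n} \<rightarrow>\<^sub>E {..<k}) \<noteq> {}"
    using nonempty_partitions[OF assms(3)] by (auto intro: finite_PiE)
  then obtain \<pi> where \<pi>: "\<pi> \<in> {..<n} \<rightarrow>\<^sub>E {..<k}" and gt: "2 / (real n)^2 * t < ?norm \<pi>"
    using assms(4) unfolding eps_def by (auto simp: Max_gr_iff)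
  obtain \<sigma> where pattern: "(\<pi>, \<sigma>) \<in> sign_patterns n k"
    and norm_eq: "?norm \<pi> = 2 / (real n)^2 * edge_deviation n Q (block_sign \<pi> \<sigma>) \<omega>"
    using norm1_blockavg_diff_eq_edge_deviation[OF assms(1,2) \<pi>] .
  from gt have "2 / (real n)^2 * t < 2 / (real n)^2 * edge_deviation n Q (block_sign \<pi> \<sigma>) \<omega>"
    unfolding norm_eq .
  then have "t < edge_deviation n Q (block_sign \<pi> \<sigma>) \<omega>"
    by (rule mult_left_less_imp_less) simp
  with pattern show ?thesis
    by auto
qed

section \<open>Chernoff bounds for edge statistics\<close>

definition edge_pmf :: "nat \<Rightarrow> (nat \<Rightarrow> nat \<Rightarrow> real) \<Rightarrow> (nat \<times> nat \<Rightarrow> bool) pmf" where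
  "edge_pmf n Q = Pi_pmf (upper_pairs n) False (\<lambda>(i, j). bernoulli_pmf (Q i j))"

lemma bern_eq_map_adjacency: "bern n Q = map_pmf adjacency (edge_pmf n Q)"
  unfolding bern_def edge_pmf_def adjacency_def upper_pairs_def by (intro map_pmf_cong refl ext) auto

lemma finite_set_edge_pmf: "finite (set_pmf (edge_pmf n Q))"
  unfolding edge_pmf_def by (rule finite_subset[OF set_Pi_pmf_subset']) auto

lemma integrable_edge_pmf [simp]: "integrable (measure_pmf (edge_pmf n Q)) (f :: _ \<Rightarrow> real)"
  by (rule integrable_measure_pmf_finite[OF finite_set_edge_pmf])

lemma expectation_edge:
  assumes "e \<in> upper_pairs n" and "0 \<le> Q (fst e) (snd e)" "Q (fst e) (snd e) \<le> 1"
  shows "measure_pmf.expectation (edge_pmf n Q) (\<lambda>\<omega>. of_bool (\<omega> e)) = Q (fst e) (snd e)"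
proof -
  have "measure_pmf.expectation (edge_pmf n Q) (\<lambda>\<omega>. of_bool (\<omega> e))
      = measure_pmf.expectation (map_pmf (\<lambda>\<omega>. \<omega> e) (edge_pmf n Q)) (of_bool :: bool \<Rightarrow> real)"
    by simp
  also have "map_pmf (\<lambda>\<omega>. \<omega> e) (edge_pmf n Q) = bernoulli_pmf (Q (fst e) (snd e))"
    unfolding edge_pmf_def using assms(1) by (subst Pi_pmf_component) (auto simp: split_beta)
  finally show ?thesis
    using assms(2,3) by simp
qed

lemma expectation_rho_adjacency:
  assumes "\<And>i j. i < n \<Longrightarrow> j < n \<Longrightarrow> Q i j = Q j i"
    and "\<And>i j. i < n \<Longrightarrow> j < n \<Longrightarrow> 0 \<le> Q i j \<and> Q i j \<le> 1"
    and "\<And>i. i < n \<Longrightarrow> Q i i = 0"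
  shows "measure_pmf.expectation (edge_pmf n Q) (\<lambda>\<omega>. rho n (adjacency \<omega>)) = rho n Q"
proof -
  have "measure_pmf.expectation (edge_pmf n Q) (\<lambda>\<omega>. rho n (adjacency \<omega>))
      = 2 / (real n)^2 * (\<Sum>e\<in>upper_pairs n. measure_pmf.expectation (edge_pmf n Q) (\<lambda>\<omega>. of_bool (\<omega> e)))"
    by (simp only: rho_adjacency integral_mult_right_zero Bochner_Integration.integral_sum
        integrable_edge_pmf)
  also have "\<dots> = 2 / (real n)^2 * edge_mass n Q"
  proof -
    have "measure_pmf.expectation (edge_pmf n Q) (\<lambda>\<omega>. of_bool (\<omega> e)) = Q (fst e) (snd e)"
      if "e \<in> upper_pairs n" for e
      using that assms(2)[of "fst e" "snd e"] by (intro expectation_edge) (auto simp: upper_pairs_def)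
    then show ?thesis
      unfolding edge_mass_def by simp
  qed
  also have "\<dots> = rho n Q"
    using assms(1,3) by (simp add: rho_eq_edge_mass)
  finally show ?thesis .
qed

lemma exp_mult_sign_le:
  fixes l d :: real
  assumes "d \<in> {-1, 0, 1}" and "0 \<le> l" "l \<le> 1"
  shows "exp (l * d) - 1 - l * d \<le> l^2"
proof -
  have "exp (- l) \<le> 1 - l + l^2"
  proof -
    have "exp (- l) = 1 / exp l" by (simp add: exp_minus field_simps)
    also have "\<dots> \<le> 1 / (1 + l)"
      using exp_ge_add_one_self[of l] assms by (intro divide_left_mono) auto
    also have "\<dots> \<le> 1 - l + l^2"
    proof -
      have "1 \<le> (1 + l) * (1 - l + l^2)"
        using assms by (simp add: algebra_simps power2_eq_square power3_eq_cube)
      then show ?thesis using assms by (simp add: field_simps)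
    qed
    finally show ?thesis .
  qed
  then show ?thesis
    using assms exp_bound[of l] by auto
qed

lemma bernoulli_mgf_le:
  fixes l d q :: real
  assumes "d \<in> {-1, 0, 1}" and "0 \<le> l" "l \<le> 1" and "0 \<le> q" "q \<le> 1"
  shows "measure_pmf.expectation (bernoulli_pmf q) (\<lambda>b. exp (l * d * (of_bool b - q))) \<le> exp (q * l^2)"
proof -
  define y where "y = l * d"
  have "measure_pmf.expectation (bernoulli_pmf q) (\<lambda>b. exp (l * d * (of_bool b - q)))
      = exp (- y * q) * (1 + q * (exp y - 1))"
    using assms(4,5) unfolding y_def by (simp add: algebra_simps exp_add[symmetric])
  also have "\<dots> \<le> exp (- y * q) * exp (q * (exp y - 1))"
    by (intro mult_left_mono) (auto simp: exp_ge_add_one_self)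
  also have "\<dots> = exp (q * (exp y - 1 - y))"
    by (simp add: exp_add[symmetric] algebra_simps)
  also have "\<dots> \<le> exp (q * l^2)"
    using exp_mult_sign_le[OF assms(1-3)] assms(4) unfolding y_def by (intro exp_mono mult_left_mono) auto
  finally show ?thesis .
qed

lemma mgf_edge_deviation_le:
  assumes Q_range: "\<And>e. e \<in> upper_pairs n \<Longrightarrow> 0 \<le> Q (fst e) (snd e) \<and> Q (fst e) (snd e) \<le> 1"
    and c: "\<And>e. e \<in> upper_pairs n \<Longrightarrow> c e \<in> {-1, 0, 1}"
    and l: "0 \<le> l" "l \<le> 1"
  shows "measure_pmf.expectation (edge_pmf n Q) (\<lambda>\<omega>. exp (l * edge_deviation n Q c \<omega>))
           \<le> exp (edge_mass n Q * l^2)"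
proof -
  define f where "f e b = exp (l * c e * (of_bool b - Q (fst e) (snd e)))" for e b
  have "measure_pmf.expectation (edge_pmf n Q) (\<lambda>\<omega>. exp (l * edge_deviation n Q c \<omega>))
      = measure_pmf.expectation (edge_pmf n Q) (\<lambda>\<omega>. \<Prod>e\<in>upper_pairs n. f e (\<omega> e))"
    unfolding f_def edge_deviation_def by (simp add: exp_sum[symmetric] sum_distrib_left mult.assoc)
  also have "\<dots> = (\<Prod>e\<in>upper_pairs n. measure_pmf.expectation (bernoulli_pmf (Q (fst e) (snd e))) (f e))"
    unfolding edge_pmf_def
    by (subst expectation_prod_Pi_pmf) (auto simp: f_def split_beta intro!: integrable_measure_pmf_finite)
  also have "\<dots> \<le> (\<Prod>e\<in>upper_pairs n. exp (Q (fst e) (snd e) * l^2))"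
  proof (rule prod_mono)
    fix e assume e: "e \<in> upper_pairs n"
    have "measure_pmf.expectation (bernoulli_pmf (Q (fst e) (snd e))) (f e) \<le> exp (Q (fst e) (snd e) * l^2)"
      unfolding f_def using Q_range[OF e] c[OF e] l by (intro bernoulli_mgf_le) auto
    moreover have "0 \<le> measure_pmf.expectation (bernoulli_pmf (Q (fst e) (snd e))) (f e)"
      unfolding f_def by (intro integral_nonneg_AE) auto
    ultimately show "0 \<le> measure_pmf.expectation (bernoulli_pmf (Q (fst e) (snd e))) (f e)
        \<and> measure_pmf.expectation (bernoulli_pmf (Q (fst e) (snd e))) (f e) \<le> exp (Q (fst e) (snd e) * l^2)"
      by blast
  qed
  also have "\<dots> = exp (edge_mass n Q * l^2)"
    unfolding edge_mass_def by (simp add: exp_sum sum_distrib_right)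
  finally show ?thesis .
qed

lemma prob_edge_deviation_ge_le:
  assumes "\<And>e. e \<in> upper_pairs n \<Longrightarrow> 0 \<le> Q (fst e) (snd e) \<and> Q (fst e) (snd e) \<le> 1"
    and "\<And>e. e \<in> upper_pairs n \<Longrightarrow> c e \<in> {-1, 0, 1}"
    and "0 < l" "l \<le> 1"
  shows "measure_pmf.prob (edge_pmf n Q) {\<omega>. \<tau> \<le> edge_deviation n Q c \<omega>}
           \<le> exp (edge_mass n Q * l^2 - l * \<tau>)"
proof -
  let ?M = "measure_pmf (edge_pmf n Q)"
  have "measure_pmf.prob (edge_pmf n Q) {\<omega> \<in> space ?M. \<tau> \<le> edge_deviation n Q c \<omega>}
      \<le> exp (- l * \<tau>) * (\<integral>\<omega>\<in>space ?M. exp (l * edge_deviation n Q c \<omega>) \<partial>?M)"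
    using assms(3) by (intro measure_pmf.Chernoff_ineq_ge) (auto simp: set_integrable_def)
  also have "\<dots> \<le> exp (- l * \<tau>) * exp (edge_mass n Q * l^2)"
    using mgf_edge_deviation_le[of n Q c l, OF assms(1,2)] assms(3,4) by (simp add: set_lebesgue_integral_def)
  finally show ?thesis
    by (simp add: exp_add[symmetric])
qed

section \<open>Tail and expectation bounds\<close>

lemma prob_eps_gt_le_union_bound:
  assumes Q_sym: "\<And>i j. i < n \<Longrightarrow> j < n \<Longrightarrow> Q i j = Q j i"
    and Q_range: "\<And>i j. i < n \<Longrightarrow> j < n \<Longrightarrow> 0 \<le> Q i j \<and> Q i j \<le> 1"
    and Q_diag: "\<And>i. i < n \<Longrightarrow> Q i i = 0"
    and "0 < k" and "0 < l" "l \<le> 1"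
  shows "measure_pmf.prob (edge_pmf n Q) {\<omega>. 2 / (real n)^2 * t < eps n k (adjacency \<omega>) Q}
           \<le> real (k ^ n * 2 ^ (k * k)) * exp (edge_mass n Q * l^2 - l * t)"
proof -
  let ?P = "measure_pmf.prob (edge_pmf n Q)"
  let ?E = "\<lambda>(\<pi>, \<sigma>). {\<omega>. t \<le> edge_deviation n Q (block_sign \<pi> \<sigma>) \<omega>}"
  have "{\<omega>. 2 / (real n)^2 * t < eps n k (adjacency \<omega>) Q} \<subseteq> (\<Union>p\<in>sign_patterns n k. ?E p)"
    using eps_gt_imp_edge_deviation_gt[of n Q, OF Q_sym Q_diag assms(4)] by force
  then have "?P {\<omega>. 2 / (real n)^2 * t < eps n k (adjacency \<omega>) Q} \<le> ?P (\<Union>p\<in>sign_patterns n k. ?E p)"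
    by (intro measure_pmf.finite_measure_mono) auto
  also have "\<dots> \<le> (\<Sum>p\<in>sign_patterns n k. ?P (?E p))"
    by (rule measure_pmf.finite_measure_subadditive_finite) auto
  also have "\<dots> \<le> (\<Sum>p\<in>sign_patterns n k. exp (edge_mass n Q * l^2 - l * t))"
  proof (intro sum_mono)
    fix p assume p: "p \<in> sign_patterns n k"
    obtain \<pi> \<sigma> where p_eq: "p = (\<pi>, \<sigma>)"
      by fastforce
    show "?P (?E p) \<le> exp (edge_mass n Q * l^2 - l * t)"
      unfolding p_eq prod.case
      by (rule prob_edge_deviation_ge_le)
        (use Q_range block_sign_cases[of \<pi> \<sigma> n k] p assms(5,6) in \<open>auto simp: p_eq upper_pairs_def\<close>)
  qed
  finally show ?thesis
    by (simp add: card_sign_patterns)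
qed

lemma edge_deviation_one:
  "edge_deviation n Q (\<lambda>_. 1) \<omega> = (\<Sum>e\<in>upper_pairs n. of_bool (\<omega> e)) - edge_mass n Q"
  unfolding edge_deviation_def edge_mass_def by (simp add: sum_subtractf)

lemma prob_eps_gt_le_edge_count:
  assumes Q_sym: "\<And>i j. i < n \<Longrightarrow> j < n \<Longrightarrow> Q i j = Q j i"
    and Q_range: "\<And>i j. i < n \<Longrightarrow> j < n \<Longrightarrow> 0 \<le> Q i j \<and> Q i j \<le> 1"
    and Q_diag: "\<And>i. i < n \<Longrightarrow> Q i i = 0"
    and "0 < k"
  shows "measure_pmf.prob (edge_pmf n Q) {\<omega>. 2 / (real n)^2 * t < eps n k (adjacency \<omega>) Q}
           \<le> exp (3 * edge_mass n Q - t)"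
proof -
  let ?m = "edge_mass n Q"
  have "{\<omega>. 2 / (real n)^2 * t < eps n k (adjacency \<omega>) Q}
      \<subseteq> {\<omega>. t - 2 * ?m \<le> edge_deviation n Q (\<lambda>_. 1) \<omega>}"
  proof
    fix \<omega> assume "\<omega> \<in> {\<omega>. 2 / (real n)^2 * t < eps n k (adjacency \<omega>) Q}"
    then have "2 / (real n)^2 * t < rho n (adjacency \<omega>) + rho n Q"
      using eps_le_rho_add_rho[of n "adjacency \<omega>" Q k] Q_range assms(4) adjacency_bounds by force
    also have "\<dots> = 2 / (real n)^2 * ((\<Sum>e\<in>upper_pairs n. of_bool (\<omega> e)) + ?m)"
      using Q_sym Q_diag by (simp add: rho_adjacency rho_eq_edge_mass algebra_simps)
    finally have "t < (\<Sum>e\<in>upper_pairs n. of_bool (\<omega> e)) + ?m"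
      by (rule mult_left_less_imp_less[of "2 / (real n)^2"]) simp
    then show "\<omega> \<in> {\<omega>. t - 2 * ?m \<le> edge_deviation n Q (\<lambda>_. 1) \<omega>}"
      by (simp add: edge_deviation_one)
  qed
  then have "measure_pmf.prob (edge_pmf n Q) {\<omega>. 2 / (real n)^2 * t < eps n k (adjacency \<omega>) Q}
      \<le> measure_pmf.prob (edge_pmf n Q) {\<omega>. t - 2 * ?m \<le> edge_deviation n Q (\<lambda>_. 1) \<omega>}"
    by (intro measure_pmf.finite_measure_mono) auto
  also have "\<dots> \<le> exp (?m * 1^2 - 1 * (t - 2 * ?m))"
    by (intro prob_edge_deviation_ge_le) (use Q_range in \<open>auto simp: upper_pairs_def\<close>)
  finally show ?thesis
    by simp
qed

lemma card_sign_patterns_mult_exp_le: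
  assumes "0 < k"
  shows "real (k ^ n * 2 ^ (k * k)) * exp (- (real n * (1 + ln (real k)) + (real k)^2)) \<le> exp (- real n)"
proof -
  have k_pow: "real k ^ n = exp (real n * ln (real k))"
    using assms by (simp add: exp_of_nat_mult)
  have "(2::real) ^ (k * k) \<le> exp 1 ^ (k * k)"
    using exp_ge_add_one_self[of 1] by (intro power_mono) auto
  also have "\<dots> = exp ((real k)^2)"
    by (simp add: exp_of_nat_mult[symmetric] power2_eq_square)
  finally have two_pow: "(2::real) ^ (k * k) / exp ((real k)^2) \<le> 1"
    by simp
  have "real (k ^ n * 2 ^ (k * k)) * exp (- (real n * (1 + ln (real k)) + (real k)^2))
      = exp (- real n) * (2 ^ (k * k) / exp ((real k)^2))"
    unfolding of_nat_mult of_nat_power k_pow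
    by (simp add: exp_add[symmetric] exp_diff exp_minus field_simps)
  also have "\<dots> \<le> exp (- real n)"
    by (rule mult_left_le[OF two_pow]) simp
  finally show ?thesis .
qed

definition rate :: "nat \<Rightarrow> nat \<Rightarrow> real" where
  "rate n k = (1 + ln (real k)) / real n + (real k)^2 / (real n)^2"

lemma inverse_le_rate:
  assumes "1 \<le> k"
  shows "1 / real n \<le> rate n k"
proof -
  have "1 / real n \<le> (1 + ln (real k)) / real n"
    using assms by (intro divide_right_mono) auto
  then show ?thesis
    unfolding rate_def by (simp add: add_increasing2)
qed

lemma eight_sqrt_rho_rate:
  assumes "\<And>i j. i < n \<Longrightarrow> j < n \<Longrightarrow> Q i j = Q j i" and "\<And>i. i < n \<Longrightarrow> Q i i = 0" and "0 < n"
  shows "8 * sqrt (rho n Q * rate n k)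
       = 2 / (real n)^2 * sqrt (32 * edge_mass n Q * (real n * (1 + ln (real k)) + (real k)^2))"
proof -
  let ?mB = "edge_mass n Q * (real n * (1 + ln (real k)) + (real k)^2)"
  have "rho n Q * rate n k = 2 * ?mB / ((real n)^2)^2"
    using assms by (simp add: rho_eq_edge_mass rate_def field_simps power2_eq_square)
  moreover have "sqrt (((real n)^2)^2) = (real n)^2"
    by (rule real_sqrt_abs[THEN trans]) simp
  ultimately have "sqrt (rho n Q * rate n k) = sqrt (2 * ?mB) / (real n)^2"
    by (simp only: real_sqrt_divide)
  moreover have "sqrt (32 * ?mB) = 4 * sqrt (2 * ?mB)"
    using real_sqrt_mult[of 16 "2 * ?mB"] by simp
  ultimately show ?thesis
    by (simp add: mult.assoc)
qed

lemma two_mult_le_exp: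
  fixes x :: real
  assumes "0 \<le> x"
  shows "2 * x \<le> exp x"
proof -
  have "2 * x \<le> 1 + x + x^2 / 2"
    using sum_squares_ge_zero[of "x - 1" 0] by (simp add: power2_eq_square algebra_simps)
  then show ?thesis
    using exp_lower_Taylor_quadratic[OF assms] by linarith
qed

lemma prob_eps_gt_le_exp_of_le_edge_mass:
  assumes Q_sym: "\<And>i j. i < n \<Longrightarrow> j < n \<Longrightarrow> Q i j = Q j i"
    and Q_range: "\<And>i j. i < n \<Longrightarrow> j < n \<Longrightarrow> 0 \<le> Q i j \<and> Q i j \<le> 1"
    and Q_diag: "\<And>i. i < n \<Longrightarrow> Q i i = 0"
    and "0 < k"
    and B: "B = real n * (1 + ln (real k)) + (real k)^2"
    and "0 < B" "B \<le> edge_mass n Q"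
  shows "measure_pmf.prob (edge_pmf n Q)
           {\<omega>. 2 / (real n)^2 * sqrt (32 * edge_mass n Q * B) < eps n k (adjacency \<omega>) Q}
         \<le> exp (- real n)"
proof -
  define m where "m = edge_mass n Q"
  define t where "t = sqrt (32 * m * B)"
  define l where "l = sqrt (B / m)"
  have m_pos: "0 < m"
    using assms(6,7) by (simp add: m_def)
  have l_sq: "l^2 = B / m" and l: "0 < l" "l \<le> 1"
    using assms(6,7) m_pos by (auto simp: l_def m_def)
  have "(l * t)^2 = B / m * (32 * m * B)"
    using assms(6) m_pos by (simp add: power_mult_distrib l_sq t_def)
  also have "\<dots> = 32 * B^2"
    using m_pos by (simp add: power2_eq_square)
  finally have "(2 * B)^2 \<le> (l * t)^2"
    by (simp add: power_mult_distrib)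
  then have "2 * B \<le> l * t"
    by (rule power2_le_imp_le) (use l m_pos assms(6) in \<open>simp add: t_def\<close>)
  moreover have "m * l^2 = B"
    using m_pos by (simp add: l_sq)
  ultimately have "exp (m * l^2 - l * t) \<le> exp (- B)"
    by simp
  moreover have "measure_pmf.prob (edge_pmf n Q) {\<omega>. 2 / (real n)^2 * t < eps n k (adjacency \<omega>) Q}
      \<le> real (k ^ n * 2 ^ (k * k)) * exp (m * l^2 - l * t)"
    unfolding m_def using Q_sym Q_range Q_diag assms(4) l by (intro prob_eps_gt_le_union_bound) auto
  moreover have "real (k ^ n * 2 ^ (k * k)) * exp (- B) \<le> exp (- real n)"
    unfolding B by (rule card_sign_patterns_mult_exp_le) fact
  ultimately show ?thesis
    unfolding t_def m_def by (meson mult_left_mono of_nat_0_le_iff order_trans)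
qed

lemma prob_eps_gt_le_exp_of_edge_mass_lt:
  assumes Q_sym: "\<And>i j. i < n \<Longrightarrow> j < n \<Longrightarrow> Q i j = Q j i"
    and Q_range: "\<And>i j. i < n \<Longrightarrow> j < n \<Longrightarrow> 0 \<le> Q i j \<and> Q i j \<le> 1"
    and Q_diag: "\<And>i. i < n \<Longrightarrow> Q i i = 0"
    and "0 < k"
    and "real n \<le> 2 * edge_mass n Q" "edge_mass n Q < B"
  shows "measure_pmf.prob (edge_pmf n Q)
           {\<omega>. 2 / (real n)^2 * sqrt (32 * edge_mass n Q * B) < eps n k (adjacency \<omega>) Q}
         \<le> exp (- real n)"
proof -
  define m where "m = edge_mass n Q"
  define t where "t = sqrt (32 * m * B)"
  have m: "0 \<le> m" "m < B"
    using Q_range assms(6) by (auto simp: m_def edge_mass_def upper_pairs_def intro: sum_nonneg)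
  then have "m * m \<le> m * B" and "0 \<le> m * B"
    by (simp_all add: mult_left_mono)
  then have "(5 * m)^2 \<le> 32 * (m * B)"
    by (simp add: power2_eq_square)
  then have "(5 * m)^2 \<le> t^2"
    using m by (simp add: t_def mult.assoc)
  then have "5 * m \<le> t"
    by (rule power2_le_imp_le) (use m in \<open>simp add: t_def\<close>)
  then have "exp (3 * m - t) \<le> exp (- real n)"
    using assms(5) by (simp add: m_def)
  moreover have "measure_pmf.prob (edge_pmf n Q) {\<omega>. 2 / (real n)^2 * t < eps n k (adjacency \<omega>) Q}
      \<le> exp (3 * m - t)"
    unfolding m_def using Q_sym Q_range Q_diag assms(4) by (intro prob_eps_gt_le_edge_count) auto
  ultimately show ?thesis
    unfolding t_def m_def by linarith
qed

lemma prob_eps_gt_tail: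
  assumes "1 \<le> k" "k \<le> n"
    and Q_sym: "\<And>i j. i < n \<Longrightarrow> j < n \<Longrightarrow> Q i j = Q j i"
    and Q_range: "\<And>i j. i < n \<Longrightarrow> j < n \<Longrightarrow> 0 \<le> Q i j \<and> Q i j \<le> 1"
    and Q_diag: "\<And>i. i < n \<Longrightarrow> Q i i = 0"
    and dense: "1 \<le> real n * rho n Q"
  shows "measure_pmf.prob (edge_pmf n Q) {\<omega>. 8 * sqrt (rho n Q * rate n k) < eps n k (adjacency \<omega>) Q}
           \<le> exp (- real n)"
proof -
  define B where "B = real n * (1 + ln (real k)) + (real k)^2"
  have n: "0 < n"
    using assms(1,2) by linarith
  have "1 \<le> 2 * edge_mass n Q / real n"
    using dense n Q_sym Q_diag by (simp add: rho_eq_edge_mass power2_eq_square)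
  then have n_le_m: "real n \<le> 2 * edge_mass n Q"
    using n by (simp add: field_simps)
  have "0 \<le> real n * ln (real k)"
    using assms(1) by simp
  then have "0 < B"
    using n unfolding B_def by (simp add: ring_distribs add_pos_nonneg)
  moreover have "8 * sqrt (rho n Q * rate n k) = 2 / (real n)^2 * sqrt (32 * edge_mass n Q * B)"
    unfolding B_def by (rule eight_sqrt_rho_rate) (use Q_sym Q_diag n in auto)
  ultimately show ?thesis
    using prob_eps_gt_le_exp_of_le_edge_mass[of n Q k B, OF Q_sym Q_range Q_diag _ B_def]
      prob_eps_gt_le_exp_of_edge_mass_lt[of n Q k B, OF Q_sym Q_range Q_diag _ n_le_m] assms(1)
    by (cases "B \<le> edge_mass n Q") auto
qed

lemma expectation_le_add_mult_prob_gt: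
  fixes f :: "'a \<Rightarrow> real"
  assumes "finite (set_pmf p)" and "\<And>x. f x \<le> c" and "0 \<le> a"
  shows "measure_pmf.expectation p f \<le> a + c * measure_pmf.prob p {x. a < f x}"
proof -
  have "f x \<le> a + c * indicator {x. a < f x} x" for x
    using assms(2)[of x] assms(3) by (auto simp: indicator_def)
  then have "measure_pmf.expectation p f \<le> measure_pmf.expectation p (\<lambda>x. a + c * indicator {x. a < f x} x)"
    using assms(1) by (intro integral_mono integrable_measure_pmf_finite)
  also have "\<dots> = a + c * measure_pmf.prob p {x. a < f x}"
    by (simp add: integrable_measure_pmf_finite[OF assms(1)])
  finally show ?thesis .
qed

lemma eps_adjacency_le_2:
  assumes "\<And>i j. i < n \<Longrightarrow> j < n \<Longrightarrow> 0 \<le> Q i j \<and> Q i j \<le> 1" and "0 < k"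
  shows "eps n k (adjacency \<omega>) Q \<le> 2"
proof -
  have "eps n k (adjacency \<omega>) Q \<le> rho n (adjacency \<omega>) + rho n Q"
    using assms adjacency_bounds by (intro eps_le_rho_add_rho) auto
  also have "\<dots> \<le> 1 + 1"
    using assms(1) adjacency_bounds by (intro add_mono rho_le_1) auto
  finally show ?thesis
    by simp
qed

lemma expectation_eps_le_2_rho:
  assumes Q_sym: "\<And>i j. i < n \<Longrightarrow> j < n \<Longrightarrow> Q i j = Q j i"
    and Q_range: "\<And>i j. i < n \<Longrightarrow> j < n \<Longrightarrow> 0 \<le> Q i j \<and> Q i j \<le> 1"
    and Q_diag: "\<And>i. i < n \<Longrightarrow> Q i i = 0"
    and "0 < k"
  shows "measure_pmf.expectation (edge_pmf n Q) (\<lambda>\<omega>. eps n k (adjacency \<omega>) Q) \<le> 2 * rho n Q"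
proof -
  have "measure_pmf.expectation (edge_pmf n Q) (\<lambda>\<omega>. eps n k (adjacency \<omega>) Q)
      \<le> measure_pmf.expectation (edge_pmf n Q) (\<lambda>\<omega>. rho n (adjacency \<omega>) + rho n Q)"
    using Q_range assms(4) adjacency_bounds by (intro integral_mono eps_le_rho_add_rho) auto
  also have "\<dots> = 2 * rho n Q"
    using expectation_rho_adjacency[of n Q] Q_sym Q_range Q_diag by simp
  finally show ?thesis .
qed

lemma expectation_eps_le:
  assumes "1 \<le> k" "k \<le> n"
    and Q_sym: "\<And>i j. i < n \<Longrightarrow> j < n \<Longrightarrow> Q i j = Q j i"
    and Q_range: "\<And>i j. i < n \<Longrightarrow> j < n \<Longrightarrow> 0 \<le> Q i j \<and> Q i j \<le> 1"
    and Q_diag: "\<And>i. i < n \<Longrightarrow> Q i i = 0"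
  shows "measure_pmf.expectation (edge_pmf n Q) (\<lambda>\<omega>. eps n k (adjacency \<omega>) Q)
           \<le> 9 * sqrt (rho n Q * rate n k)"
proof -
  let ?S = "sqrt (rho n Q * rate n k)"
  have n: "0 < n"
    using assms(1,2) by linarith
  have rho: "0 \<le> rho n Q"
    using Q_range by (intro rho_nonneg) auto
  have rate: "1 / real n \<le> rate n k"
    using inverse_le_rate[OF assms(1)] .
  show ?thesis
  proof (cases "1 \<le> real n * rho n Q")
    case True
    have rho_rate: "(1 / real n)^2 \<le> rho n Q * rate n k"
      unfolding power2_eq_square using True n rate rho by (intro mult_mono) (auto simp: field_simps)
    then have "1 / real n \<le> ?S"
      by (rule real_le_rsqrt)
    moreover have "2 * exp (- real n) \<le> 1 / real n"
      using two_mult_le_exp[of "real n"] n by (simp add: exp_minus field_simps)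
    moreover have "measure_pmf.expectation (edge_pmf n Q) (\<lambda>\<omega>. eps n k (adjacency \<omega>) Q)
        \<le> 8 * ?S + 2 * measure_pmf.prob (edge_pmf n Q) {\<omega>. 8 * ?S < eps n k (adjacency \<omega>) Q}"
      using eps_adjacency_le_2[of n Q, OF Q_range] assms(1) order_trans[OF zero_le_power2 rho_rate]
      by (intro expectation_le_add_mult_prob_gt finite_set_edge_pmf) auto
    moreover have "measure_pmf.prob (edge_pmf n Q) {\<omega>. 8 * ?S < eps n k (adjacency \<omega>) Q} \<le> exp (- real n)"
      using assms True by (intro prob_eps_gt_tail) auto
    ultimately show ?thesis
      by linarith
  next
    case False
    then have "rho n Q \<le> 1 / real n"
      using n by (simp add: field_simps)
    then have "rho n Q * rho n Q \<le> rho n Q * rate n k"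
      using order_trans[OF _ rate] rho by (intro mult_left_mono) auto
    then have "rho n Q \<le> ?S"
      by (intro real_le_rsqrt) (simp add: power2_eq_square)
    then show ?thesis
      using expectation_eps_le_2_rho[of n Q k, OF Q_sym Q_range Q_diag] assms(1) rho by fastforce
  qed
qed

lemma prob_eps_le:
  assumes "1 \<le> k" "k \<le> n"
    and "\<And>i j. i < n \<Longrightarrow> j < n \<Longrightarrow> Q i j = Q j i"
    and "\<And>i j. i < n \<Longrightarrow> j < n \<Longrightarrow> 0 \<le> Q i j \<and> Q i j \<le> 1"
    and "\<And>i. i < n \<Longrightarrow> Q i i = 0"
    and "1 \<le> real n * rho n Q"
  shows "1 - exp (- real n)
           \<le> measure_pmf.prob (edge_pmf n Q) {\<omega>. eps n k (adjacency \<omega>) Q \<le> 8 * sqrt (rho n Q * rate n k)}"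
proof -
  let ?bad = "{\<omega>. 8 * sqrt (rho n Q * rate n k) < eps n k (adjacency \<omega>) Q}"
  have "measure_pmf.prob (edge_pmf n Q) {\<omega>. eps n k (adjacency \<omega>) Q \<le> 8 * sqrt (rho n Q * rate n k)}
      = measure_pmf.prob (edge_pmf n Q) (space (measure_pmf (edge_pmf n Q)) - ?bad)"
    by (simp add: set_diff_eq not_less)
  also have "\<dots> = 1 - measure_pmf.prob (edge_pmf n Q) ?bad"
    by (rule measure_pmf.prob_compl) simp
  finally show ?thesis
    using prob_eps_gt_tail[OF assms] by simp
qed

theorem lemmaB2:
  fixes n k :: nat and Q :: "nat \<Rightarrow> nat \<Rightarrow> real"
  assumes "1 \<le> k" "k \<le> n"
    and "\<And>i j. i < n \<Longrightarrow> j < n \<Longrightarrow> Q i j = Q j i"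
    and "\<And>i j. i < n \<Longrightarrow> j < n \<Longrightarrow> 0 \<le> Q i j \<and> Q i j \<le> 1"
    and "\<And>i. i < n \<Longrightarrow> Q i i = 0"
  shows "measure_pmf.expectation (bern n Q) (\<lambda>A. eps n k A Q)
           \<le> 9 * sqrt (rho n Q * ((1 + ln (real k)) / real n + (real k)^2 / (real n)^2))
       \<and> (real n * rho n Q \<ge> 1 \<longrightarrow>
         measure_pmf.prob (bern n Q)
           {A. eps n k A Q \<le> 8 * sqrt (rho n Q * ((1 + ln (real k)) / real n + (real k)^2 / (real n)^2))}
         \<ge> 1 - exp (- real n))"
  using expectation_eps_le[OF assms] prob_eps_le[OF assms]
  unfolding bern_eq_map_adjacency rate_def by simp

end
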